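(* Let $n\ge 1$. For $i,j\in\{1,\dots,n\}$ let $L_i>0$, $\mu_i>0$, $\theta_i\ge 0$, $\lambda_i\ge 0$ and $\gamma_{ij}\ge 0$ be real numbers with $\gamma_{ii}=0$ and $\gamma_{ij}=\gamma_{ji}$ for all $i,j$. Let $A$ be the $n\times n$ matrix with entries $$A_{ii}=-\Big(\frac{\mu_i}{L_i}+\theta_i+\sum_{j=1}^n\frac{\gamma_{ij}}{L_i}\Big),\qquad A_{ij}=\frac{\gamma_{ij}}{L_j}\quad (i\neq j),$$ and let $b\in\mathbb{R}^n$ have entries $b_i=\mu_i-\lambda_i$. Then $A$ is invertible and the equilibrium point $y^*=-A^{-1}b$ of the linear system of differential equations $y'(t)=Ay(t)+b$ is a stable equilibrium point.
   Context: The system models the inventory levels $y_i(t)$ of $n$ warehouses in one echelon: $L_i$ is the maximum inventory level, $\mu_i$ the maximum supply rate, $\theta_i$ the deterioration percentage per unit time, $\lambda_i$ the demand rate of warehouse $i$, and $\gamma_{ij}$ the maximum lateral transshipment rate from warehouse $i$ to $j$. Componentwise, $y_i'=(\mu_i-\lambda_i)-\big(\mu_i/L_i+\theta_i+\sum_j\gamma_{ij}/L_i\big)y_i+\sum_j(\gamma_{ij}/L_j)y_j$. *)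

theory Defs
  imports "HOL-Analysis.Analysis"
begin

definition is_solution :: "real^'n^'n \<Rightarrow> real^'n \<Rightarrow> (real \<Rightarrow> real^'n) \<Rightarrow> bool" where
  "is_solution A b y \<longleftrightarrow>
     (\<forall>t\<ge>0. (y has_vector_derivative (A *v y t + b)) (at t within {0..}))"

definition stable_equilibrium :: "real^'n^'n \<Rightarrow> real^'n \<Rightarrow> real^'n \<Rightarrow> bool" where
  "stable_equilibrium A b ys \<longleftrightarrow>
     A *v ys + b = 0 \<and>
     (\<forall>\<epsilon>>0. \<exists>\<delta>>0. \<forall>y. is_solution A b y \<and> norm (y 0 - ys) < \<delta> \<longrightarrow>
        (\<forall>t\<ge>0. norm (y t - ys) < \<epsilon>))"

end

theory Submission
  imports Defs
begin

text \<open>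
  Up to the positive column scaling by 1/L_j, the matrix A is symmetric with a strictly
  dominant negative diagonal: A = S D^-1 with D = diag L and
  w' S w = - sum_i (mu_i + theta_i L_i) w_i^2 - 1/2 sum_ij gamma_ij (w_i - w_j)^2 < 0 for w \<noteq> 0.
  Hence the weighted norm V(x) = sum_i x_i^2 / L_i satisfies d/dt V(y - y*) = 2 w' S w \<le> 0
  with w = D^-1 (y - y*), so V is a Lyapunov function; its strict negativity also rules out a
  nontrivial kernel of A. Nothing about b (hence about lam) is needed.
\<close>

lemma symmetric_weighted_sum_nonneg:
  fixes g :: "'n::finite \<Rightarrow> 'n \<Rightarrow> real" and w :: "'n \<Rightarrow> real"
  assumes "\<And>i j. g i j \<ge> 0" and "\<And>i j. g i j = g j i"
  shows "(\<Sum>i\<in>UNIV. \<Sum>j\<in>UNIV. g i j * ((w i)^2 - w i * w j)) \<ge> 0"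
proof -
  let ?X = "\<Sum>i\<in>UNIV. \<Sum>j\<in>UNIV. g i j * ((w i)^2 - w i * w j)"
  have swapped: "?X = (\<Sum>i\<in>UNIV. \<Sum>j\<in>UNIV. g i j * ((w j)^2 - w i * w j))"
    by (subst sum.swap) (simp add: assms(2) mult.commute)
  have "2 * ?X = (\<Sum>i\<in>UNIV. \<Sum>j\<in>UNIV. g i j * ((w i)^2 - w i * w j) + g i j * ((w j)^2 - w i * w j))"
    by (subst mult_2, subst (2) swapped) (simp add: sum.distrib)
  also have "\<dots> = (\<Sum>i\<in>UNIV. \<Sum>j\<in>UNIV. g i j * (w i - w j)^2)"
    by (intro sum.cong refl) (simp add: power2_eq_square algebra_simps)
  also have "\<dots> \<ge> 0"
    using assms(1) by (intro sum_nonneg mult_nonneg_nonneg) auto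
  finally show ?thesis by simp
qed

lemma matrix_inv_right:
  assumes "invertible A"
  shows "A ** matrix_inv A = mat 1"
  using assms unfolding invertible_def matrix_inv_def by (rule someI_ex[THEN conjunct1])

lemma matrix_inv_equilibrium:
  fixes A :: "real^'n^'n"
  assumes "invertible A"
  shows "A *v (- (matrix_inv A *v b)) + b = 0"
proof -
  have "A *v (- x) = - (A *v x)" for x :: "real^'n"
    using matrix_vector_mult_diff_distrib[of A 0 x] by simp
  then show ?thesis
    by (simp add: matrix_vector_mul_assoc matrix_inv_right[OF assms])
qed

lemma invertible_if_weighted_form_negative:
  fixes A :: "real^'n^'n"
  assumes "\<And>x. x \<noteq> 0 \<Longrightarrow> (\<Sum>i\<in>UNIV. c i * x$i * (A *v x)$i) < 0"
  shows "invertible A"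
proof -
  have "x = 0" if "A *v x = 0" for x
    using assms[of x] that by force
  then show ?thesis
    by (simp add: invertible_left_inverse matrix_left_invertible_ker)
qed


lemma power2_norm_vec: "(norm x)^2 = (\<Sum>i\<in>UNIV. (x$i)^2)"
  unfolding power2_norm_eq_inner inner_vec_def by (simp add: power2_eq_square)

definition weighted_sq_norm :: "('n::finite \<Rightarrow> real) \<Rightarrow> real^'n \<Rightarrow> real" where
  "weighted_sq_norm c x = (\<Sum>i\<in>UNIV. c i * (x$i)^2)"

lemma sq_norm_le_weighted_sq_norm:
  assumes "\<And>i. c i \<ge> m" and "m > 0"
  shows "m * (norm x)^2 \<le> weighted_sq_norm c x"
proof -
  have "m * (norm x)^2 = (\<Sum>i\<in>UNIV. m * (x$i)^2)"
    by (simp add: power2_norm_vec sum_distrib_left)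
  also have "\<dots> \<le> weighted_sq_norm c x"
    unfolding weighted_sq_norm_def using assms by (intro sum_mono mult_right_mono) auto
  finally show ?thesis .
qed

lemma weighted_sq_norm_le_sq_norm:
  assumes "\<And>i. c i \<le> M"
  shows "weighted_sq_norm c x \<le> M * (norm x)^2"
proof -
  have "weighted_sq_norm c x \<le> (\<Sum>i\<in>UNIV. M * (x$i)^2)"
    unfolding weighted_sq_norm_def using assms by (intro sum_mono mult_right_mono) auto
  also have "\<dots> = M * (norm x)^2"
    by (simp add: power2_norm_vec sum_distrib_left)
  finally show ?thesis .
qed

lemma has_real_derivative_weighted_sq_norm:
  assumes "(z has_vector_derivative z') (at s within S)"
  shows "((\<lambda>s. weighted_sq_norm c (z s)) has_real_derivative
           2 * (\<Sum>i\<in>UNIV. c i * z s$i * z'$i)) (at s within S)"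
proof -
  have "((\<lambda>s. z s $ i) has_real_derivative z'$i) (at s within S)" for i
    using bounded_linear.has_vector_derivative[OF bounded_linear_vec_nth assms, of i]
    by (simp add: has_real_derivative_iff_has_vector_derivative)
  then have "((\<lambda>s. c i * (z s$i)^2) has_real_derivative 2 * (c i * z s$i * z'$i)) (at s within S)" for i
    by (auto intro!: derivative_eq_intros)
  then show ?thesis
    unfolding weighted_sq_norm_def sum_distrib_left by (intro DERIV_sum) auto
qed

lemma nonincreasing_if_derivative_nonpos:
  fixes f f' :: "real \<Rightarrow> real"
  assumes "\<And>s. s \<ge> 0 \<Longrightarrow> (f has_real_derivative f' s) (at s within {0..})"
    and "\<And>s. s \<ge> 0 \<Longrightarrow> f' s \<le> 0"
    and "t \<ge> 0"
  shows "f t \<le> f 0"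
proof (rule DERIV_nonpos_imp_decreasing_open[OF \<open>t \<ge> 0\<close>])
  fix s :: real assume s: "0 < s" "s < t"
  have "(f has_real_derivative f' s) (at s within {0<..})"
    using assms(1)[of s] s by (auto intro: has_field_derivative_subset)
  then have "(f has_real_derivative f' s) (at s)"
    using s by (simp add: at_within_open[of s "{0<..}"])
  with assms(2)[of s] s show "\<exists>y. (f has_real_derivative y) (at s) \<and> y \<le> 0"
    by auto
next
  have "continuous_on {0..} f"
    unfolding continuous_on_eq_continuous_within using assms(1) by (auto intro: DERIV_continuous)
  then show "continuous_on {0..t} f"
    by (rule continuous_on_subset) auto
qed

lemma weighted_sq_norm_nonincreasing_along_solution:
  fixes A :: "real^'n^'n"
  assumes "is_solution A b y" and "A *v ys + b = 0"
    and "\<And>x. (\<Sum>i\<in>UNIV. c i * x$i * (A *v x)$i) \<le> 0"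
    and "t \<ge> 0"
  shows "weighted_sq_norm c (y t - ys) \<le> weighted_sq_norm c (y 0 - ys)"
proof -
  have "((\<lambda>s. y s - ys) has_vector_derivative A *v (y s - ys)) (at s within {0..})"
    if "s \<ge> 0" for s
  proof -
    have "A *v (y s - ys) = A *v y s + b - 0"
      using assms(2) by (simp add: matrix_vector_mult_diff_distrib algebra_simps)
    with assms(1) that show ?thesis
      unfolding is_solution_def by (auto intro!: derivative_eq_intros)
  qed
  then have "((\<lambda>s. weighted_sq_norm c (y s - ys)) has_real_derivative
       2 * (\<Sum>i\<in>UNIV. c i * (y s - ys)$i * (A *v (y s - ys))$i)) (at s within {0..})"
    if "s \<ge> 0" for s
    using that by (intro has_real_derivative_weighted_sq_norm)
  moreover have "2 * (\<Sum>i\<in>UNIV. c i * (y s - ys)$i * (A *v (y s - ys))$i) \<le> 0" for s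
    using assms(3)[of "y s - ys"] by linarith
  ultimately show ?thesis
    using \<open>t \<ge> 0\<close> by (rule nonincreasing_if_derivative_nonpos)
qed

lemma stable_equilibrium_if_weighted_form_nonpos:
  fixes A :: "real^'n^'n"
  assumes "A *v ys + b = 0" and "\<And>i. c i > 0"
    and "\<And>x. (\<Sum>i\<in>UNIV. c i * x$i * (A *v x)$i) \<le> 0"
  shows "stable_equilibrium A b ys"
  unfolding stable_equilibrium_def
proof (intro conjI assms(1) allI impI)
  fix \<epsilon> :: real assume "\<epsilon> > 0"
  define m where "m = Min (range c)"
  define M where "M = Max (range c)"
  have cm: "m \<le> c i" and cM: "c i \<le> M" for i
    by (simp_all add: m_def M_def)
  have "m > 0"
    unfolding m_def using assms(2) by (simp add: Min_gr_iff)
  then have "M > 0"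
    using cm cM by (meson less_le_trans)
  define \<delta> where "\<delta> = \<epsilon> * sqrt (m / M)"
  have "\<delta> > 0"
    using \<open>\<epsilon> > 0\<close> \<open>m > 0\<close> \<open>M > 0\<close> by (simp add: \<delta>_def)
  moreover have "norm (y t - ys) < \<epsilon>"
    if y: "is_solution A b y \<and> norm (y 0 - ys) < \<delta>" and "t \<ge> 0" for y t
  proof -
    have "m * (norm (y t - ys))^2 \<le> weighted_sq_norm c (y t - ys)"
      using cm \<open>m > 0\<close> by (rule sq_norm_le_weighted_sq_norm)
    also have "\<dots> \<le> weighted_sq_norm c (y 0 - ys)"
      using y assms(1,3) \<open>t \<ge> 0\<close> by (intro weighted_sq_norm_nonincreasing_along_solution) auto
    also have "\<dots> \<le> M * (norm (y 0 - ys))^2"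
      using cM by (rule weighted_sq_norm_le_sq_norm)
    also have "\<dots> < M * \<delta>^2"
      using y \<open>M > 0\<close> by (simp add: power_strict_mono)
    also have "\<dots> = m * \<epsilon>^2"
      using \<open>m > 0\<close> \<open>M > 0\<close> by (simp add: \<delta>_def power_mult_distrib)
    finally have "(norm (y t - ys))^2 < \<epsilon>^2"
      using \<open>m > 0\<close> by simp
    then show ?thesis
      using \<open>\<epsilon> > 0\<close> by (simp add: power_less_imp_less_base)
  qed
  ultimately show "\<exists>\<delta>>0. \<forall>y. is_solution A b y \<and> norm (y 0 - ys) < \<delta> \<longrightarrow>
                      (\<forall>t\<ge>0. norm (y t - ys) < \<epsilon>)"
    by blast
qed


lemma inventory_weighted_form_bound:
  fixes L \<mu> \<theta> :: "'n::finite \<Rightarrow> real" and \<gamma> :: "'n \<Rightarrow> 'n \<Rightarrow> real" and A :: "real^'n^'n"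
  assumes "\<And>i. L i > 0" and "\<And>i. \<theta> i \<ge> 0"
    and "\<And>i j. \<gamma> i j \<ge> 0" and "\<And>i. \<gamma> i i = 0" and "\<And>i j. \<gamma> i j = \<gamma> j i"
    and "\<And>i. A $ i $ i = - (\<mu> i / L i + \<theta> i + (\<Sum>j\<in>UNIV. \<gamma> i j / L i))"
    and "\<And>i j. i \<noteq> j \<Longrightarrow> A $ i $ j = \<gamma> i j / L j"
  shows "(\<Sum>i\<in>UNIV. 1 / L i * z$i * (A *v z)$i) \<le> - (\<Sum>i\<in>UNIV. \<mu> i * (z$i / L i)^2)"
proof -
  define w where "w i = z$i / L i" for i
  have z_eq: "z$i = L i * w i" for i
    using assms(1)[of i] by (simp add: w_def)
  have row: "(A *v z)$i = (\<Sum>j\<in>UNIV. \<gamma> i j * w j) + A$i$i * z$i" for i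
  proof -
    have "(A *v z)$i = (\<Sum>j\<in>UNIV. \<gamma> i j * w j + (if j = i then A$i$i * z$i else 0))"
      unfolding matrix_vector_mult_def
      using assms(1) by (auto intro!: sum.cong simp: assms(4,7) z_eq less_imp_neq[symmetric])
    then show ?thesis by (simp add: sum.distrib)
  qed
  have term_eq: "1 / L i * z$i * (A *v z)$i = - (\<mu> i + \<theta> i * L i) * (w i)^2
      - (\<Sum>j\<in>UNIV. \<gamma> i j * ((w i)^2 - w i * w j))" for i
  proof -
    have "1 / L i * z$i * (A *v z)$i = (\<Sum>j\<in>UNIV. w i * (\<gamma> i j * w j))
        - (\<mu> i + \<theta> i * L i) * (w i)^2 - (\<Sum>j\<in>UNIV. \<gamma> i j / L i) * L i * (w i)^2"
      using assms(1)[of i] unfolding row assms(6) z_eq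
      by (simp add: sum_distrib_left power2_eq_square field_simps)
    also have "(\<Sum>j\<in>UNIV. \<gamma> i j / L i) * L i = (\<Sum>j\<in>UNIV. \<gamma> i j)"
      using assms(1)[of i] by (simp add: sum_divide_distrib[symmetric])
    finally show ?thesis
      by (simp add: sum_subtractf sum_distrib_left sum_distrib_right algebra_simps)
  qed
  have "(\<Sum>i\<in>UNIV. 1 / L i * z$i * (A *v z)$i) =
      (\<Sum>i\<in>UNIV. - (\<mu> i + \<theta> i * L i) * (w i)^2)
      - (\<Sum>i\<in>UNIV. \<Sum>j\<in>UNIV. \<gamma> i j * ((w i)^2 - w i * w j))"
    unfolding term_eq by (simp add: sum_subtractf)
  also have "\<dots> \<le> (\<Sum>i\<in>UNIV. - (\<mu> i + \<theta> i * L i) * (w i)^2)"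
    using symmetric_weighted_sum_nonneg[of \<gamma> w, OF assms(3,5)] by simp
  also have "\<dots> \<le> (\<Sum>i\<in>UNIV. - \<mu> i * (w i)^2)"
    using assms(1,2) by (intro sum_mono) (simp add: algebra_simps less_imp_le)
  finally show ?thesis
    by (simp add: w_def sum_negf)
qed

theorem proposition2:
  fixes L \<mu> \<theta> lam :: "'n::finite \<Rightarrow> real" and \<gamma> :: "'n \<Rightarrow> 'n \<Rightarrow> real"
    and A :: "real^'n^'n" and b :: "real^'n"
  assumes "\<And>i. L i > 0" and "\<And>i. \<mu> i > 0" and "\<And>i. \<theta> i \<ge> 0" and "\<And>i. lam i \<ge> 0"
    and "\<And>i j. \<gamma> i j \<ge> 0" and "\<And>i. \<gamma> i i = 0" and "\<And>i j. \<gamma> i j = \<gamma> j i"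
    and "\<And>i. A $ i $ i = - (\<mu> i / L i + \<theta> i + (\<Sum>j\<in>UNIV. \<gamma> i j / L i))"
    and "\<And>i j. i \<noteq> j \<Longrightarrow> A $ i $ j = \<gamma> i j / L j"
    and "\<And>i. b $ i = \<mu> i - lam i"
  shows "invertible A \<and> stable_equilibrium A b (- (matrix_inv A *v b))"
proof -
  have bound: "(\<Sum>i\<in>UNIV. 1 / L i * z$i * (A *v z)$i) \<le> - (\<Sum>i\<in>UNIV. \<mu> i * (z$i / L i)^2)" for z
    using assms(1,3,5-9) by (rule inventory_weighted_form_bound)
  have "(\<Sum>i\<in>UNIV. \<mu> i * (z$i / L i)^2) > 0" if "z \<noteq> 0" for z
  proof -
    obtain k where "z$k \<noteq> 0"
      using \<open>z \<noteq> 0\<close> by (auto simp: vec_eq_iff)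
    then have "\<mu> k * (z$k / L k)^2 > 0"
      using assms(1,2)[of k] by simp
    then show ?thesis
      using assms(2) by (intro sum_pos2[of UNIV k]) (auto simp: less_imp_le)
  qed
  with bound have "invertible A"
    by (intro invertible_if_weighted_form_negative[of "\<lambda>i. 1 / L i"])
       (meson neg_less_0_iff_less order_le_less_trans)
  moreover have "stable_equilibrium A b (- (matrix_inv A *v b))"
  proof (rule stable_equilibrium_if_weighted_form_nonpos[of _ _ _ "\<lambda>i. 1 / L i"])
    show "A *v (- (matrix_inv A *v b)) + b = 0"
      using \<open>invertible A\<close> by (rule matrix_inv_equilibrium)
    show "(\<Sum>i\<in>UNIV. 1 / L i * z$i * (A *v z)$i) \<le> 0" for z
      using bound[of z] assms(2) by (smt (verit) sum_nonneg zero_le_mult_iff zero_le_power2)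
  qed (simp add: assms(1))
  ultimately show ?thesis ..
qed

end
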